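(* Let $\mathbf P=(P,\leq,0,1)$ be a bounded poset which is the horizontal sum of bounded posets $\mathbf P_{\alpha}=(P_{\alpha},\leq_{\alpha},0,1)$, $\alpha\in\Lambda$. Then the Dedekind-MacNeille completion $\mathrm{DM}(\mathbf P)$ is order-isomorphic to the horizontal sum of the complete lattices $\mathrm{DM}(\mathbf P_{\alpha})$, $\alpha\in\Lambda$.
   Context: The horizontal sum of a family of bounded posets is obtained from their disjoint union by identifying all the bottom elements into a single element $0$ and all the top elements into a single element $1$; two elements are comparable only if one of them is $0$ or $1$ or both lie in the same summand and are comparable there. For a poset $\mathbf P$ and $M\subseteq P$, $U(M)$ and $L(M)$ denote the sets of upper and lower bounds of $M$. The Dedekind-MacNeille completion $\mathrm{DM}(\mathbf P)$ is the complete lattice $(\{B\subseteq P\mid L(U(B))=B\},\subseteq)$, into which $P$ embeds via $x\mapsto L(\{x\})$. *)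

theory Defs
  imports Main
begin

definition bounded_poset :: "'a set \<Rightarrow> ('a \<Rightarrow> 'a \<Rightarrow> bool) \<Rightarrow> 'a \<Rightarrow> 'a \<Rightarrow> bool" where
  "bounded_poset A le zero one \<longleftrightarrow>
     (\<forall>x\<in>A. le x x) \<and>
     (\<forall>x\<in>A. \<forall>y\<in>A. le x y \<and> le y x \<longrightarrow> x = y) \<and>
     (\<forall>x\<in>A. \<forall>y\<in>A. \<forall>z\<in>A. le x y \<and> le y z \<longrightarrow> le x z) \<and>
     zero \<in> A \<and> one \<in> A \<and> (\<forall>x\<in>A. le zero x \<and> le x one)"

definition Ub :: "'a set \<Rightarrow> ('a \<Rightarrow> 'a \<Rightarrow> bool) \<Rightarrow> 'a set \<Rightarrow> 'a set" where
  "Ub A le M = {y\<in>A. \<forall>x\<in>M. le x y}"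

definition Lb :: "'a set \<Rightarrow> ('a \<Rightarrow> 'a \<Rightarrow> bool) \<Rightarrow> 'a set \<Rightarrow> 'a set" where
  "Lb A le M = {y\<in>A. \<forall>x\<in>M. le y x}"

definition DM :: "'a set \<Rightarrow> ('a \<Rightarrow> 'a \<Rightarrow> bool) \<Rightarrow> 'a set set" where
  "DM A le = {B. B \<subseteq> A \<and> Lb A le (Ub A le B) = B}"

text \<open>Horizontal sum of a family of bounded posets (Q \<alpha>, le \<alpha>, zero \<alpha>, one \<alpha>), \<alpha> \<in> I:
  disjoint union of the summands with all bottoms identified to HBot and all tops to HTop.\<close>

datatype 'x hs = HBot | HTop | HEl 'x

definition hsum_carrier :: "'i set \<Rightarrow> ('i \<Rightarrow> 'b set) \<Rightarrow> ('i \<Rightarrow> 'b) \<Rightarrow> ('i \<Rightarrow> 'b)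
    \<Rightarrow> ('i \<times> 'b) hs set" where
  "hsum_carrier I Q zero one =
     {HBot, HTop} \<union> {HEl (\<alpha>, x) | \<alpha> x. \<alpha> \<in> I \<and> x \<in> Q \<alpha> \<and> x \<noteq> zero \<alpha> \<and> x \<noteq> one \<alpha>}"

fun hsum_le :: "('i \<Rightarrow> 'b \<Rightarrow> 'b \<Rightarrow> bool) \<Rightarrow> ('i \<times> 'b) hs \<Rightarrow> ('i \<times> 'b) hs \<Rightarrow> bool" where
  "hsum_le le HBot y = True"
| "hsum_le le x HTop = True"
| "hsum_le le (HEl (\<alpha>, x)) (HEl (\<beta>, y)) = (\<alpha> = \<beta> \<and> le \<alpha> x y)"
| "hsum_le le _ _ = False"

definition order_iso :: "'a set \<Rightarrow> ('a \<Rightarrow> 'a \<Rightarrow> bool) \<Rightarrow> 'b set \<Rightarrow> ('b \<Rightarrow> 'b \<Rightarrow> bool)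
    \<Rightarrow> ('a \<Rightarrow> 'b) \<Rightarrow> bool" where
  "order_iso A leA B leB f \<longleftrightarrow>
     bij_betw f A B \<and> (\<forall>x\<in>A. \<forall>y\<in>A. leA x y \<longleftrightarrow> leB (f x) (f y))"

end

theory Submission
  imports Defs
begin

(* A cut of the horizontal sum that contains 1 is the whole carrier, and so is a cut containing
   elements of two different summands, since their only common upper bound is 1. Hence every
   cut other than {0} and the whole carrier lies in P\<^sub>\<alpha> for a single \<alpha>. Inside P\<^sub>\<alpha>, upper
   bounds (of a set with an element other than 0) and lower bounds (of a set with an element
   other than 1) are the same whether computed in the sum or in P\<^sub>\<alpha>, so these cuts are
   exactly the cuts of P\<^sub>\<alpha> other than {0} and P\<^sub>\<alpha>. Sending 0 to {0}, 1 to the whole carrier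
   and such a cut of P\<^sub>\<alpha> to itself is therefore an order isomorphism from the horizontal sum
   of the completions onto the completion of the sum. *)

lemma order_iso_inv_into:
  assumes "order_iso A leA B leB f"
  shows "order_iso B leB A leA (inv_into A f)"
proof -
  have bij: "bij_betw f A B"
    using assms by (simp add: order_iso_def)
  have "leB x y \<longleftrightarrow> leA (inv_into A f x) (inv_into A f y)" if "x \<in> B" "y \<in> B" for x y
    using assms that bij_betw_inv_into_right[OF bij] bij_betw_apply[OF bij_betw_inv_into[OF bij]]
    unfolding order_iso_def by metis
  then show ?thesis
    by (simp add: order_iso_def bij_betw_inv_into[OF bij])
qed

lemma Ub_image_order_embedding:
  assumes "e ` A \<subseteq> B" and "\<And>x y. x \<in> A \<Longrightarrow> y \<in> A \<Longrightarrow> leB (e x) (e y) \<longleftrightarrow> leA x y"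
    and "M \<subseteq> A"
  shows "Ub B leB (e ` M) \<inter> e ` A = e ` Ub A leA M"
proof (intro equalityI subsetI)
  fix u
  assume "u \<in> Ub B leB (e ` M) \<inter> e ` A"
  then obtain y where "u = e y" "y \<in> A" "\<forall>m\<in>M. leB (e m) (e y)"
    by (auto simp: Ub_def)
  then have "y \<in> Ub A leA M"
    using assms(2,3) by (auto simp: Ub_def)
  then show "u \<in> e ` Ub A leA M"
    using \<open>u = e y\<close> by blast
next
  fix u
  assume "u \<in> e ` Ub A leA M"
  then obtain y where "u = e y" "y \<in> A" "\<forall>m\<in>M. leA m y"
    by (auto simp: Ub_def)
  then show "u \<in> Ub B leB (e ` M) \<inter> e ` A"
    using assms by (auto simp: Ub_def)
qed

lemma Lb_image_order_embedding:
  assumes "e ` A \<subseteq> B" and "\<And>x y. x \<in> A \<Longrightarrow> y \<in> A \<Longrightarrow> leB (e x) (e y) \<longleftrightarrow> leA x y"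
    and "M \<subseteq> A"
  shows "Lb B leB (e ` M) \<inter> e ` A = e ` Lb A leA M"
proof (intro equalityI subsetI)
  fix u
  assume "u \<in> Lb B leB (e ` M) \<inter> e ` A"
  then obtain y where "u = e y" "y \<in> A" "\<forall>m\<in>M. leB (e y) (e m)"
    by (auto simp: Lb_def)
  then have "y \<in> Lb A leA M"
    using assms(2,3) by (auto simp: Lb_def)
  then show "u \<in> e ` Lb A leA M"
    using \<open>u = e y\<close> by blast
next
  fix u
  assume "u \<in> e ` Lb A leA M"
  then obtain y where "u = e y" "y \<in> A" "\<forall>m\<in>M. leA y m"
    by (auto simp: Lb_def)
  then show "u \<in> Lb B leB (e ` M) \<inter> e ` A"
    using assms by (auto simp: Lb_def)
qed

context
  fixes A :: "'a set" and le :: "'a \<Rightarrow> 'a \<Rightarrow> bool" and zero one :: 'a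
  assumes bounded: "bounded_poset A le zero one"
begin

lemma bounded_poset_refl: "x \<in> A \<Longrightarrow> le x x"
  and bounded_poset_antisym: "x \<in> A \<Longrightarrow> y \<in> A \<Longrightarrow> le x y \<Longrightarrow> le y x \<Longrightarrow> x = y"
  and bounded_poset_trans: "x \<in> A \<Longrightarrow> y \<in> A \<Longrightarrow> z \<in> A \<Longrightarrow> le x y \<Longrightarrow> le y z \<Longrightarrow> le x z"
  and bounded_poset_zero_mem: "zero \<in> A"
  and bounded_poset_one_mem: "one \<in> A"
  and bounded_poset_zero_le: "x \<in> A \<Longrightarrow> le zero x"
  and bounded_poset_le_one: "x \<in> A \<Longrightarrow> le x one"
  using bounded unfolding bounded_poset_def by blast+

lemma Lb_Ub_eq_carrier: "Ub A le M \<subseteq> {one} \<Longrightarrow> Lb A le (Ub A le M) = A"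
  using bounded_poset_le_one by (auto simp: Lb_def)

lemma zero_mem_DM:
  assumes "C \<in> DM A le"
  shows "zero \<in> C"
proof -
  have "zero \<in> Lb A le (Ub A le C)"
    using bounded_poset_zero_mem bounded_poset_zero_le by (simp add: Lb_def Ub_def)
  then show ?thesis
    using assms by (simp add: DM_def)
qed

lemma Lb_Ub_eq_carrier_if_one_mem:
  assumes "one \<in> M"
  shows "Lb A le (Ub A le M) = A"
proof (rule Lb_Ub_eq_carrier)
  show "Ub A le M \<subseteq> {one}"
    using assms bounded_poset_antisym bounded_poset_le_one bounded_poset_one_mem
    by (auto simp: Ub_def)
qed

lemma DM_eq_carrier_if_one_mem: "C \<in> DM A le \<Longrightarrow> one \<in> C \<Longrightarrow> C = A"
  using Lb_Ub_eq_carrier_if_one_mem by (simp add: DM_def)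

lemma proper_DM:
  assumes "C \<in> DM A le" "C \<noteq> {zero}" "C \<noteq> A"
  shows "one \<notin> C" "\<exists>x\<in>C. x \<noteq> zero" "\<exists>y\<in>Ub A le C. y \<noteq> one"
proof -
  show "one \<notin> C"
    using assms DM_eq_carrier_if_one_mem by blast
  show "\<exists>x\<in>C. x \<noteq> zero"
    using assms zero_mem_DM by blast
  show "\<exists>y\<in>Ub A le C. y \<noteq> one"
    using assms Lb_Ub_eq_carrier by (auto simp: DM_def)
qed

lemma DM_bounded_poset: "bounded_poset (DM A le) (\<subseteq>) {zero} A"
proof -
  have "Lb A le (Ub A le {zero}) = {zero}"
    using bounded_poset_zero_mem bounded_poset_zero_le bounded_poset_antisym
    by (auto simp: Lb_def Ub_def)
  then have "{zero} \<in> DM A le"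
    using bounded_poset_zero_mem by (simp add: DM_def)
  moreover have "A \<in> DM A le"
    using Lb_Ub_eq_carrier_if_one_mem bounded_poset_one_mem by (simp add: DM_def)
  moreover have "{zero} \<subseteq> C \<and> C \<subseteq> A" if "C \<in> DM A le" for C
    using that zero_mem_DM by (simp add: DM_def)
  ultimately show ?thesis
    by (auto simp: bounded_poset_def)
qed

end

lemma hsum_le_HBot_iff [simp]: "hsum_le le x HBot \<longleftrightarrow> x = HBot"
  by (cases x) auto

lemma hsum_le_HTop_iff [simp]: "hsum_le le HTop y \<longleftrightarrow> y = HTop"
  by (cases y) auto

lemma hsum_le_HTop [simp]: "hsum_le le x HTop"
  by (cases x) auto

lemma hsum_le_HEl_iff:
  "hsum_le le x (HEl (\<alpha>, b)) \<longleftrightarrow> x = HBot \<or> (\<exists>a. x = HEl (\<alpha>, a) \<and> le \<alpha> a b)"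
  "hsum_le le (HEl (\<alpha>, b)) y \<longleftrightarrow> y = HTop \<or> (\<exists>c. y = HEl (\<alpha>, c) \<and> le \<alpha> b c)"
  by (cases x rule: hs.exhaust[case_product prod.exhaust];
      cases y rule: hs.exhaust[case_product prod.exhaust]; auto)+

lemma HEl_mem_hsum_carrier [simp]:
  "HEl (\<alpha>, x) \<in> hsum_carrier I P zero one \<longleftrightarrow> \<alpha> \<in> I \<and> x \<in> P \<alpha> \<and> x \<noteq> zero \<alpha> \<and> x \<noteq> one \<alpha>"
  by (simp add: hsum_carrier_def)

lemma hsum_bounded_poset:
  assumes summands: "\<And>\<alpha>. \<alpha> \<in> I \<Longrightarrow> bounded_poset (P \<alpha>) (le \<alpha>) (zero \<alpha>) (one \<alpha>)"
  shows "bounded_poset (hsum_carrier I P zero one) (hsum_le le) HBot HTop"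
  unfolding bounded_poset_def
proof (intro conjI ballI impI)
  fix x y z
  assume carrier: "x \<in> hsum_carrier I P zero one" "y \<in> hsum_carrier I P zero one"
    "z \<in> hsum_carrier I P zero one" and le: "hsum_le le x y \<and> hsum_le le y z"
  then show "hsum_le le x z"
  proof (cases y)
    case (HEl p)
    then obtain \<alpha> b where "y = HEl (\<alpha>, b)"
      by (cases p) blast
    then show ?thesis
      using carrier le summands[THEN bounded_poset_trans]
      by (auto simp: hsum_le_HEl_iff)
  qed auto
next
  fix x y
  assume carrier: "x \<in> hsum_carrier I P zero one" "y \<in> hsum_carrier I P zero one"
    and le: "hsum_le le x y \<and> hsum_le le y x"
  then show "x = y"
  proof (cases y)
    case (HEl p)
    then obtain \<alpha> b where "y = HEl (\<alpha>, b)"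
      by (cases p) blast
    then show ?thesis
      using carrier le summands[THEN bounded_poset_antisym]
      by (auto simp: hsum_le_HEl_iff)
  qed auto
next
  fix x
  assume "x \<in> hsum_carrier I P zero one"
  then show "hsum_le le x x"
    using summands[THEN bounded_poset_refl] by (auto simp: hsum_carrier_def)
qed (simp_all add: hsum_carrier_def)

locale horizontal_sum =
  fixes I :: "'i set" and P :: "'i \<Rightarrow> 'a set" and le :: "'i \<Rightarrow> 'a \<Rightarrow> 'a \<Rightarrow> bool"
    and zero one :: "'i \<Rightarrow> 'a"
  assumes summand: "\<alpha> \<in> I \<Longrightarrow> bounded_poset (P \<alpha>) (le \<alpha>) (zero \<alpha>) (one \<alpha>)"
begin

abbreviation "H \<equiv> hsum_carrier I P zero one"
abbreviation "hle \<equiv> hsum_le le"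

lemma H_bounded_poset: "bounded_poset H hle HBot HTop"
  using summand by (rule hsum_bounded_poset)

definition emb :: "'i \<Rightarrow> 'a \<Rightarrow> ('i \<times> 'a) hs" where
  "emb \<alpha> x = (if x = zero \<alpha> then HBot else if x = one \<alpha> then HTop else HEl (\<alpha>, x))"

lemma emb_eq_iff:
  "emb \<alpha> x = HBot \<longleftrightarrow> x = zero \<alpha>"
  "emb \<alpha> x = HTop \<longleftrightarrow> x \<noteq> zero \<alpha> \<and> x = one \<alpha>"
  "emb \<alpha> x = HEl p \<longleftrightarrow> x \<noteq> zero \<alpha> \<and> x \<noteq> one \<alpha> \<and> p = (\<alpha>, x)"
  by (auto simp: emb_def)

lemma emb_zero: "emb \<alpha> (zero \<alpha>) = HBot"
  by (simp add: emb_def)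

lemma emb_mem: "\<alpha> \<in> I \<Longrightarrow> x \<in> P \<alpha> \<Longrightarrow> emb \<alpha> x \<in> H"
  by (simp add: emb_def hsum_carrier_def)

lemma one_neq_zero:
  assumes "\<alpha> \<in> I" "x \<in> P \<alpha>" "x \<noteq> zero \<alpha>"
  shows "one \<alpha> \<noteq> zero \<alpha>"
proof
  note bounded = summand[OF \<open>\<alpha> \<in> I\<close>]
  assume "one \<alpha> = zero \<alpha>"
  then have "le \<alpha> x (zero \<alpha>)"
    using bounded_poset_le_one[OF bounded \<open>x \<in> P \<alpha>\<close>] by simp
  then show False
    using assms bounded_poset_antisym[OF bounded] bounded_poset_zero_le[OF bounded]
      bounded_poset_zero_mem[OF bounded] by blast
qed

lemma emb_le_iff:
  assumes "\<alpha> \<in> I" "x \<in> P \<alpha>" "y \<in> P \<alpha>"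
  shows "hle (emb \<alpha> x) (emb \<alpha> y) \<longleftrightarrow> le \<alpha> x y"
proof -
  note bounded = summand[OF \<open>\<alpha> \<in> I\<close>]
  consider "x = zero \<alpha>" | "x \<noteq> zero \<alpha>" "x = one \<alpha>" | "x \<noteq> zero \<alpha>" "x \<noteq> one \<alpha>"
    by blast
  then show ?thesis
  proof cases
    case 1
    then show ?thesis
      using bounded_poset_zero_le[OF bounded] assms by (simp add: emb_def)
  next
    case 2
    have "le \<alpha> (one \<alpha>) y \<longleftrightarrow> y = one \<alpha>"
    proof
      assume "le \<alpha> (one \<alpha>) y"
      then show "y = one \<alpha>"
        using assms bounded_poset_antisym[OF bounded] bounded_poset_le_one[OF bounded]
          bounded_poset_one_mem[OF bounded] by blast
    qed (use assms bounded_poset_refl[OF bounded] in simp)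
    with 2 show ?thesis
      by (auto simp: emb_def)
  next
    case 3
    have "\<not> le \<alpha> x (zero \<alpha>)"
    proof
      assume "le \<alpha> x (zero \<alpha>)"
      then show False
        using 3 assms bounded_poset_antisym[OF bounded] bounded_poset_zero_le[OF bounded]
          bounded_poset_zero_mem[OF bounded] by blast
    qed
    with 3 show ?thesis
      using assms bounded_poset_le_one[OF bounded]
      by (cases "y = zero \<alpha>"; cases "y = one \<alpha>") (simp_all add: emb_def)
  qed
qed

lemma inj_on_emb:
  assumes "\<alpha> \<in> I"
  shows "inj_on (emb \<alpha>) (P \<alpha>)"
proof (rule inj_onI)
  fix x y
  assume "x \<in> P \<alpha>" "y \<in> P \<alpha>" "emb \<alpha> x = emb \<alpha> y"
  then have "le \<alpha> x y" "le \<alpha> y x"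
    using assms emb_le_iff summand[THEN bounded_poset_refl] by metis+
  then show "x = y"
    using assms \<open>x \<in> P \<alpha>\<close> \<open>y \<in> P \<alpha>\<close> summand[THEN bounded_poset_antisym] by blast
qed

lemma outside_summand_cases:
  assumes "\<alpha> \<in> I" "u \<in> H" "u \<notin> emb \<alpha> ` P \<alpha>"
  obtains "u = HTop" | \<beta> y where "u = HEl (\<beta>, y)" "\<beta> \<noteq> \<alpha>"
proof (cases u)
  case HBot
  have "HBot \<in> emb \<alpha> ` P \<alpha>"
    using emb_zero summand[OF \<open>\<alpha> \<in> I\<close>, THEN bounded_poset_zero_mem] by (metis image_eqI)
  with HBot assms show ?thesis
    by blast
next
  case (HEl p)
  obtain \<beta> y where "p = (\<beta>, y)"
    by fastforce
  moreover have "\<beta> \<noteq> \<alpha>"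
  proof
    assume "\<beta> = \<alpha>"
    then have "u = emb \<alpha> y" "y \<in> P \<alpha>"
      using assms(2) \<open>u = HEl p\<close> \<open>p = (\<beta>, y)\<close> by (auto simp: emb_def)
    then show False
      using assms(3) by blast
  qed
  ultimately show ?thesis
    using that \<open>u = HEl p\<close> by blast
qed

lemma emb_le_outside_summand:
  assumes "\<alpha> \<in> I" "x \<in> P \<alpha>" "u \<in> H" "u \<notin> emb \<alpha> ` P \<alpha>" "hle (emb \<alpha> x) u"
  shows "x = zero \<alpha>"
proof (rule ccontr)
  assume "x \<noteq> zero \<alpha>"
  then have "emb \<alpha> (one \<alpha>) = HTop"
    using assms one_neq_zero by (simp add: emb_def)
  then have "u \<noteq> HTop"
    using assms summand[THEN bounded_poset_one_mem] by force
  then obtain \<beta> y where "u = HEl (\<beta>, y)" "\<beta> \<noteq> \<alpha>"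
    using outside_summand_cases assms by metis
  then show False
    using assms(5) \<open>x \<noteq> zero \<alpha>\<close> by (auto simp: emb_def split: if_splits)
qed

lemma outside_summand_le_emb:
  assumes "\<alpha> \<in> I" "x \<in> P \<alpha>" "u \<in> H" "u \<notin> emb \<alpha> ` P \<alpha>" "hle u (emb \<alpha> x)"
  shows "x = one \<alpha>"
proof (rule ccontr)
  assume "x \<noteq> one \<alpha>"
  from assms(1,3,4) show False
    by (cases rule: outside_summand_cases)
      (use assms(5) \<open>x \<noteq> one \<alpha>\<close> in \<open>auto simp: emb_def split: if_splits\<close>)
qed

lemma Ub_emb:
  assumes "\<alpha> \<in> I" "M \<subseteq> P \<alpha>" "x \<in> M" "x \<noteq> zero \<alpha>"
  shows "Ub H hle (emb \<alpha> ` M) = emb \<alpha> ` Ub (P \<alpha>) (le \<alpha>) M"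
proof -
  have "Ub H hle (emb \<alpha> ` M) \<subseteq> emb \<alpha> ` P \<alpha>"
  proof
    fix u
    assume "u \<in> Ub H hle (emb \<alpha> ` M)"
    then have "u \<in> H" "hle (emb \<alpha> x) u"
      using assms(3) by (auto simp: Ub_def)
    then show "u \<in> emb \<alpha> ` P \<alpha>"
      using assms emb_le_outside_summand by blast
  qed
  moreover have "Ub H hle (emb \<alpha> ` M) \<inter> emb \<alpha> ` P \<alpha> = emb \<alpha> ` Ub (P \<alpha>) (le \<alpha>) M"
    by (rule Ub_image_order_embedding) (use assms emb_mem emb_le_iff in auto)
  ultimately show ?thesis
    by (simp add: Int_absorb2)
qed

lemma Lb_emb:
  assumes "\<alpha> \<in> I" "M \<subseteq> P \<alpha>" "x \<in> M" "x \<noteq> one \<alpha>"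
  shows "Lb H hle (emb \<alpha> ` M) = emb \<alpha> ` Lb (P \<alpha>) (le \<alpha>) M"
proof -
  have "Lb H hle (emb \<alpha> ` M) \<subseteq> emb \<alpha> ` P \<alpha>"
  proof
    fix u
    assume "u \<in> Lb H hle (emb \<alpha> ` M)"
    then have "u \<in> H" "hle u (emb \<alpha> x)"
      using assms(3) by (auto simp: Lb_def)
    then show "u \<in> emb \<alpha> ` P \<alpha>"
      using assms outside_summand_le_emb by blast
  qed
  moreover have "Lb H hle (emb \<alpha> ` M) \<inter> emb \<alpha> ` P \<alpha> = emb \<alpha> ` Lb (P \<alpha>) (le \<alpha>) M"
    by (rule Lb_image_order_embedding) (use assms emb_mem emb_le_iff in auto)
  ultimately show ?thesis
    by (simp add: Int_absorb2)
qed

lemma Lb_Ub_emb: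
  assumes "\<alpha> \<in> I" "M \<subseteq> P \<alpha>" "x \<in> M" "x \<noteq> zero \<alpha>" "y \<in> Ub (P \<alpha>) (le \<alpha>) M" "y \<noteq> one \<alpha>"
  shows "Lb H hle (Ub H hle (emb \<alpha> ` M)) = emb \<alpha> ` Lb (P \<alpha>) (le \<alpha>) (Ub (P \<alpha>) (le \<alpha>) M)"
proof -
  have "Ub (P \<alpha>) (le \<alpha>) M \<subseteq> P \<alpha>"
    by (simp add: Ub_def)
  then show ?thesis
    using assms by (simp add: Ub_emb Lb_emb)
qed

lemma emb_DM:
  assumes "\<alpha> \<in> I" "C \<in> DM (P \<alpha>) (le \<alpha>)" "C \<noteq> {zero \<alpha>}" "C \<noteq> P \<alpha>"
  shows "emb \<alpha> ` C \<in> DM H hle"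
proof -
  obtain x y where "x \<in> C" "x \<noteq> zero \<alpha>" "y \<in> Ub (P \<alpha>) (le \<alpha>) C" "y \<noteq> one \<alpha>"
    using proper_DM[OF summand] assms by metis
  moreover have "C \<subseteq> P \<alpha>" "Lb (P \<alpha>) (le \<alpha>) (Ub (P \<alpha>) (le \<alpha>) C) = C"
    using assms(2) by (simp_all add: DM_def)
  ultimately show ?thesis
    using assms(1) Lb_Ub_emb emb_mem by (auto simp: DM_def)
qed

lemma DM_H_single_summand:
  assumes "B \<in> DM H hle" "HTop \<notin> B" "HEl (\<alpha>, x) \<in> B" "HEl (\<beta>, y) \<in> B"
  shows "\<alpha> = \<beta>"
proof (rule ccontr)
  assume "\<alpha> \<noteq> \<beta>"
  have "Ub H hle B \<subseteq> {HTop}"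
  proof
    fix u
    assume "u \<in> Ub H hle B"
    then have "hle (HEl (\<alpha>, x)) u" "hle (HEl (\<beta>, y)) u"
      using assms(3,4) by (auto simp: Ub_def)
    then show "u \<in> {HTop}"
      using \<open>\<alpha> \<noteq> \<beta>\<close> by (auto simp: hsum_le_HEl_iff)
  qed
  then have "B = H"
    using assms(1) Lb_Ub_eq_carrier[OF H_bounded_poset] by (simp add: DM_def)
  then show False
    using assms(2) by (simp add: hsum_carrier_def)
qed

lemma DM_H_eq_emb_image:
  assumes "B \<in> DM H hle" "HTop \<notin> B" "HEl (\<alpha>, x) \<in> B"
  shows "B = emb \<alpha> ` {y \<in> P \<alpha>. emb \<alpha> y \<in> B}"
proof
  have "\<alpha> \<in> I" "B \<subseteq> H"
    using assms(1,3) by (auto simp: DM_def)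
  show "B \<subseteq> emb \<alpha> ` {y \<in> P \<alpha>. emb \<alpha> y \<in> B}"
  proof
    fix u
    assume "u \<in> B"
    show "u \<in> emb \<alpha> ` {y \<in> P \<alpha>. emb \<alpha> y \<in> B}"
    proof (cases u)
      case HBot
      then have "u = emb \<alpha> (zero \<alpha>)" "zero \<alpha> \<in> P \<alpha>"
        using emb_zero summand[OF \<open>\<alpha> \<in> I\<close>, THEN bounded_poset_zero_mem] by simp_all
      then show ?thesis
        using \<open>u \<in> B\<close> by blast
    next
      case HTop
      then show ?thesis
        using \<open>u \<in> B\<close> assms(2) by blast
    next
      case (HEl p)
      obtain \<beta> y where "p = (\<beta>, y)"
        by fastforce
      then have "\<beta> = \<alpha>"
        using DM_H_single_summand assms \<open>u \<in> B\<close> HEl by blast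
      then have "u = emb \<alpha> y" "y \<in> P \<alpha>"
        using \<open>u \<in> B\<close> \<open>B \<subseteq> H\<close> HEl \<open>p = (\<beta>, y)\<close> by (auto simp: emb_def)
      then show ?thesis
        using \<open>u \<in> B\<close> by blast
    qed
  qed
qed blast

lemma DM_H_summand_cut:
  assumes "B \<in> DM H hle" "HTop \<notin> B" "HEl (\<alpha>, x) \<in> B"
  defines "C \<equiv> {y \<in> P \<alpha>. emb \<alpha> y \<in> B}"
  shows "\<alpha> \<in> I" "C \<in> DM (P \<alpha>) (le \<alpha>)" "C \<noteq> {zero \<alpha>}" "C \<noteq> P \<alpha>" "B = emb \<alpha> ` C"
proof -
  have B: "B \<subseteq> H" "Lb H hle (Ub H hle B) = B"
    using assms(1) by (simp_all add: DM_def)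
  then have "\<alpha> \<in> I" and x: "x \<in> P \<alpha>" "x \<noteq> zero \<alpha>" "x \<noteq> one \<alpha>"
    using assms(3) by auto
  then show "\<alpha> \<in> I"
    by simp
  show B_eq: "B = emb \<alpha> ` C"
    unfolding C_def using assms(1-3) by (rule DM_H_eq_emb_image)
  have "x \<in> C"
    using x assms(3) by (simp add: C_def emb_def)
  then show "C \<noteq> {zero \<alpha>}"
    using x by blast
  have "emb \<alpha> (one \<alpha>) = HTop"
    using one_neq_zero[OF \<open>\<alpha> \<in> I\<close> x(1,2)] by (simp add: emb_def)
  then have "one \<alpha> \<notin> C"
    using assms(2) by (simp add: C_def)
  then show "C \<noteq> P \<alpha>"
    using summand[OF \<open>\<alpha> \<in> I\<close>, THEN bounded_poset_one_mem] by blast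
  have "C \<subseteq> P \<alpha>"
    by (simp add: C_def)
  have "\<not> Ub (P \<alpha>) (le \<alpha>) C \<subseteq> {one \<alpha>}"
  proof
    assume "Ub (P \<alpha>) (le \<alpha>) C \<subseteq> {one \<alpha>}"
    then have "Ub H hle B \<subseteq> {HTop}"
      using Ub_emb[OF \<open>\<alpha> \<in> I\<close> \<open>C \<subseteq> P \<alpha>\<close> \<open>x \<in> C\<close> x(2)] B_eq \<open>emb \<alpha> (one \<alpha>) = HTop\<close>
      by auto
    then have "B = H"
      using B(2) Lb_Ub_eq_carrier[OF H_bounded_poset] by simp
    then show False
      using assms(2) by (simp add: hsum_carrier_def)
  qed
  then obtain y where "y \<in> Ub (P \<alpha>) (le \<alpha>) C" "y \<noteq> one \<alpha>"
    by blast
  then have "emb \<alpha> ` Lb (P \<alpha>) (le \<alpha>) (Ub (P \<alpha>) (le \<alpha>) C) = emb \<alpha> ` C"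
    using Lb_Ub_emb[OF \<open>\<alpha> \<in> I\<close> \<open>C \<subseteq> P \<alpha>\<close> \<open>x \<in> C\<close> x(2)] B(2) B_eq by simp
  then have "Lb (P \<alpha>) (le \<alpha>) (Ub (P \<alpha>) (le \<alpha>) C) = C"
    using inj_on_image_eq_iff[OF inj_on_emb[OF \<open>\<alpha> \<in> I\<close>]] \<open>C \<subseteq> P \<alpha>\<close> by (auto simp: Lb_def)
  then show "C \<in> DM (P \<alpha>) (le \<alpha>)"
    using \<open>C \<subseteq> P \<alpha>\<close> by (simp add: DM_def)
qed

lemma DM_H_cases:
  assumes "B \<in> DM H hle"
  obtains "B = {HBot}" | "B = H"
  | \<alpha> C where "\<alpha> \<in> I" "C \<in> DM (P \<alpha>) (le \<alpha>)" "C \<noteq> {zero \<alpha>}" "C \<noteq> P \<alpha>" "B = emb \<alpha> ` C"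
proof (cases "HTop \<in> B")
  case True
  then show ?thesis
    using that(2) DM_eq_carrier_if_one_mem[OF H_bounded_poset assms] by simp
next
  case False
  show ?thesis
  proof (cases "\<exists>\<alpha> x. HEl (\<alpha>, x) \<in> B")
    case True
    then obtain \<alpha> x where "HEl (\<alpha>, x) \<in> B"
      by blast
    show ?thesis
      using DM_H_summand_cut[OF assms False \<open>HEl (\<alpha>, x) \<in> B\<close>] by (rule that(3))
  next
    case no_HEl: False
    have "u = HBot" if "u \<in> B" for u
      using that False no_HEl by (cases u) auto
    then show ?thesis
      using that(1) zero_mem_DM[OF H_bounded_poset assms] by blast
  qed
qed

lemma emb_proper_DM:
  assumes "\<alpha> \<in> I" "C \<in> DM (P \<alpha>) (le \<alpha>)" "C \<noteq> {zero \<alpha>}" "C \<noteq> P \<alpha>"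
  shows "HTop \<notin> emb \<alpha> ` C" "\<exists>x. HEl (\<alpha>, x) \<in> emb \<alpha> ` C"
proof -
  have "one \<alpha> \<notin> C"
    using proper_DM[OF summand] assms by blast
  then show "HTop \<notin> emb \<alpha> ` C"
    by (auto simp: emb_eq_iff dest: sym)
  obtain x where "x \<in> C" "x \<noteq> zero \<alpha>"
    using proper_DM[OF summand] assms by blast
  then have "HEl (\<alpha>, x) = emb \<alpha> x"
    using \<open>one \<alpha> \<notin> C\<close> by (auto simp: emb_def)
  then show "\<exists>x. HEl (\<alpha>, x) \<in> emb \<alpha> ` C"
    using \<open>x \<in> C\<close> by blast
qed

lemma emb_proper_DM_subset_iff:
  assumes "\<alpha> \<in> I" "C \<in> DM (P \<alpha>) (le \<alpha>)" "C \<noteq> {zero \<alpha>}" "C \<noteq> P \<alpha>" "D \<subseteq> P \<beta>"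
  shows "emb \<alpha> ` C \<subseteq> emb \<beta> ` D \<longleftrightarrow> \<alpha> = \<beta> \<and> C \<subseteq> D"
proof
  assume sub: "emb \<alpha> ` C \<subseteq> emb \<beta> ` D"
  obtain x where "HEl (\<alpha>, x) \<in> emb \<alpha> ` C"
    using emb_proper_DM[OF assms(1-4)] by blast
  then obtain d where "emb \<beta> d = HEl (\<alpha>, x)"
    using sub by (metis imageE subsetD)
  then have "\<alpha> = \<beta>"
    by (simp add: emb_eq_iff)
  moreover have "C \<subseteq> P \<alpha>"
    using assms(2) by (simp add: DM_def)
  ultimately show "\<alpha> = \<beta> \<and> C \<subseteq> D"
    using sub assms(5) inj_on_image_mem_iff[OF inj_on_emb[OF assms(1)]] by blast
qed auto

abbreviation "DM_sum \<equiv> hsum_carrier I (\<lambda>\<alpha>. DM (P \<alpha>) (le \<alpha>)) (\<lambda>\<alpha>. {zero \<alpha>}) P"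
abbreviation "DM_sum_le \<equiv> hsum_le (\<lambda>_. (\<subseteq>)) :: ('i \<times> 'a set) hs \<Rightarrow> ('i \<times> 'a set) hs \<Rightarrow> bool"

lemma DM_sum_bounded_poset: "bounded_poset DM_sum DM_sum_le HBot HTop"
  by (rule hsum_bounded_poset) (rule DM_bounded_poset[OF summand])

fun cut_of :: "('i \<times> 'a set) hs \<Rightarrow> ('i \<times> 'a) hs set" where
  "cut_of HBot = {HBot}"
| "cut_of HTop = H"
| "cut_of (HEl (\<alpha>, C)) = emb \<alpha> ` C"

lemma cut_of_mem_DM:
  assumes "t \<in> DM_sum"
  shows "cut_of t \<in> DM H hle"
proof (cases t rule: cut_of.cases)
  case 1
  then show ?thesis
    using DM_bounded_poset[OF H_bounded_poset] by (simp add: bounded_poset_zero_mem)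
next
  case 2
  then show ?thesis
    using DM_bounded_poset[OF H_bounded_poset] by (simp add: bounded_poset_one_mem)
next
  case (3 \<alpha> C)
  then show ?thesis
    using assms emb_DM by simp
qed

lemma cut_of_image: "cut_of ` DM_sum = DM H hle"
proof
  show "cut_of ` DM_sum \<subseteq> DM H hle"
    using cut_of_mem_DM by blast
next
  show "DM H hle \<subseteq> cut_of ` DM_sum"
  proof
    fix B
    assume "B \<in> DM H hle"
    then show "B \<in> cut_of ` DM_sum"
    proof (cases rule: DM_H_cases)
      case 1
      show ?thesis
        by (rule rev_image_eqI[of HBot]) (simp_all add: 1 hsum_carrier_def)
    next
      case 2
      show ?thesis
        by (rule rev_image_eqI[of HTop]) (simp_all add: 2 hsum_carrier_def)
    next
      case (3 \<alpha> C)
      show ?thesis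
        by (rule rev_image_eqI[of "HEl (\<alpha>, C)"]) (simp_all add: 3)
    qed
  qed
qed

lemma HTop_mem_cut_of_iff:
  assumes "t \<in> DM_sum"
  shows "HTop \<in> cut_of t \<longleftrightarrow> t = HTop"
proof (cases t rule: cut_of.cases)
  case (3 \<alpha> C)
  then show ?thesis
    using assms emb_proper_DM(1) by simp
qed (simp_all add: hsum_carrier_def)

lemma cut_of_subset_iff:
  assumes "s \<in> DM_sum" "t \<in> DM_sum"
  shows "cut_of s \<subseteq> cut_of t \<longleftrightarrow> DM_sum_le s t"
proof -
  have s_DM: "cut_of s \<in> DM H hle" and t_DM: "cut_of t \<in> DM H hle"
    using assms cut_of_mem_DM by blast+
  show ?thesis
  proof (cases s rule: cut_of.cases)
    case 1
    then show ?thesis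
      using zero_mem_DM[OF H_bounded_poset t_DM] by simp
  next
    case 2
    have "H \<subseteq> cut_of t \<longleftrightarrow> HTop \<in> cut_of t"
      using DM_eq_carrier_if_one_mem[OF H_bounded_poset t_DM] by (auto simp: hsum_carrier_def)
    then show ?thesis
      using 2 HTop_mem_cut_of_iff[OF assms(2)] by simp
  next
    case (3 \<alpha> C)
    then have C: "\<alpha> \<in> I" "C \<in> DM (P \<alpha>) (le \<alpha>)" "C \<noteq> {zero \<alpha>}" "C \<noteq> P \<alpha>"
      using assms(1) by simp_all
    show ?thesis
    proof (cases t rule: cut_of.cases)
      case 1
      then show ?thesis
        using 3 emb_proper_DM(2)[OF C] by auto
    next
      case 2
      then show ?thesis
        using 3 s_DM by (simp add: DM_def)
    next
      case (3 \<beta> D)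
      then have "D \<subseteq> P \<beta>"
        using assms(2) by (simp add: DM_def)
      then show ?thesis
        using 3 \<open>s = HEl (\<alpha>, C)\<close> emb_proper_DM_subset_iff[OF C] by simp
    qed
  qed
qed

lemma order_iso_cut_of: "order_iso DM_sum DM_sum_le (DM H hle) (\<subseteq>) cut_of"
proof -
  have "inj_on cut_of DM_sum"
  proof (rule inj_onI)
    fix s t
    assume s: "s \<in> DM_sum" and t: "t \<in> DM_sum" and "cut_of s = cut_of t"
    then have "DM_sum_le s t" "DM_sum_le t s"
      using cut_of_subset_iff[OF s t] cut_of_subset_iff[OF t s] by simp_all
    then show "s = t"
      using bounded_poset_antisym[OF DM_sum_bounded_poset s t] by simp
  qed
  then show ?thesis
    using cut_of_image cut_of_subset_iff by (simp add: order_iso_def bij_betw_def)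
qed

end

theorem proposition3:
  fixes I :: "'i set"
    and P :: "'i \<Rightarrow> 'a set"
    and le :: "'i \<Rightarrow> 'a \<Rightarrow> 'a \<Rightarrow> bool"
    and zero one :: "'i \<Rightarrow> 'a"
  assumes "\<And>\<alpha>. \<alpha> \<in> I \<Longrightarrow> bounded_poset (P \<alpha>) (le \<alpha>) (zero \<alpha>) (one \<alpha>)"
  shows "\<exists>f. order_iso
           (DM (hsum_carrier I P zero one) (hsum_le le)) (\<subseteq>)
           (hsum_carrier I (\<lambda>\<alpha>. DM (P \<alpha>) (le \<alpha>)) (\<lambda>\<alpha>. {zero \<alpha>}) P)
           (hsum_le (\<lambda>\<alpha>. (\<subseteq>)))
           f"
proof -
  interpret horizontal_sum I P le zero one
    using assms by (rule horizontal_sum.intro)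
  show ?thesis
    using order_iso_inv_into[OF order_iso_cut_of] by blast
qed

end
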